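(* Let $S,T\subseteq\{1,\dots,n-1\}$ be nonempty. Let $U_{S,T}=\{s_j-s_i>0 : s_i,s_j\in S\}\cup\{t_j-t_i>0: t_i,t_j\in T\}\cup\{s+t : s\in S, t\in T\}$. Then $\gcd(U_{S,T})=\gcd\{s+t: s\in S, t\in T\}$. *)

theory Defs
  imports Main
begin

definition U_set :: "nat set \<Rightarrow> nat set \<Rightarrow> nat set" where
  "U_set S T =
     {sj - si | si sj. si \<in> S \<and> sj \<in> S \<and> si < sj}
   \<union> {tj - ti | ti tj. ti \<in> T \<and> tj \<in> T \<and> ti < tj}
   \<union> {s + t | s t. s \<in> S \<and> t \<in> T}"

end

theory Submission
  imports Defs
begin

(* Every element of U_{S,T} that is not a sum s + t is a difference of two such sums with a
   common summand, (s_j + t) - (s_i + t) or (s + t_j) - (s + t_i), so adjoining these elements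
   does not change the gcd. *)

lemma Gcd_Un_eq_if_Gcd_dvd:
  fixes A B :: "'a::semiring_Gcd set"
  assumes "\<And>b. b \<in> B \<Longrightarrow> Gcd A dvd b"
  shows "Gcd (B \<union> A) = Gcd A"
proof (rule Gcd_eqI)
  show "\<And>x. x \<in> B \<union> A \<Longrightarrow> Gcd A dvd x"
    using assms Gcd_dvd by blast
  show "\<And>c. (\<And>x. x \<in> B \<union> A \<Longrightarrow> c dvd x) \<Longrightarrow> c dvd Gcd A"
    by (simp add: Gcd_greatest)
qed simp

lemma dvd_diff_if_dvd_sums:
  fixes d :: nat
  assumes "\<And>s t. s \<in> S \<Longrightarrow> t \<in> T \<Longrightarrow> d dvd s + t"
    and "t \<in> T" and "si \<in> S" and "sj \<in> S"
  shows "d dvd sj - si"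
proof -
  have "d dvd (sj + t) - (si + t)"
    using assms by (intro dvd_diff_nat) auto
  then show ?thesis by simp
qed

theorem proposition2p2:
  fixes n :: nat and S T :: "nat set"
  assumes "S \<subseteq> {1..n-1}" and "T \<subseteq> {1..n-1}"
      and "S \<noteq> {}" and "T \<noteq> {}"
  shows "Gcd (U_set S T) = Gcd {s + t | s t. s \<in> S \<and> t \<in> T}"
proof -
  define A where "A = {s + t | s t. s \<in> S \<and> t \<in> T}"
  define D where "D = {sj - si | si sj. si \<in> S \<and> sj \<in> S \<and> si < sj}
                    \<union> {tj - ti | ti tj. ti \<in> T \<and> tj \<in> T \<and> ti < tj}"
  have sums: "\<And>s t. s \<in> S \<Longrightarrow> t \<in> T \<Longrightarrow> Gcd A dvd s + t"
    by (rule Gcd_dvd) (auto simp: A_def)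
  have sums': "Gcd A dvd t + s" if "t \<in> T" and "s \<in> S" for t s
    using sums[OF that(2,1)] by (simp add: add.commute)
  obtain s0 t0 where "s0 \<in> S" "t0 \<in> T"
    using assms(3,4) by blast
  have "Gcd A dvd d" if "d \<in> D" for d
    using that unfolding D_def
  proof (elim UnE CollectE exE conjE)
    fix si sj assume "d = sj - si" "si \<in> S" "sj \<in> S"
    then show ?thesis
      using dvd_diff_if_dvd_sums[OF sums \<open>t0 \<in> T\<close>] by simp
  next
    fix ti tj assume "d = tj - ti" "ti \<in> T" "tj \<in> T"
    then show ?thesis
      using dvd_diff_if_dvd_sums[OF sums' \<open>s0 \<in> S\<close>] by simp
  qed
  then have "Gcd (D \<union> A) = Gcd A"
    by (rule Gcd_Un_eq_if_Gcd_dvd)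
  moreover have "U_set S T = D \<union> A"
    by (simp add: U_set_def D_def A_def)
  ultimately show ?thesis
    by (simp add: A_def)
qed

end
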